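(* Let $\mathfrak{A}$ be a $(\circ,\wedge,\mathsf{A})$-algebra and $\theta$ a representation of $\mathfrak{A}$ by partial functions. Then $\theta$ is atomic if and only if $\theta$ is complete.
   Context: A $(\circ,\wedge,\mathsf{A})$-algebra is a set with two binary operations $\circ,\wedge$ and one unary operation $\mathsf{A}$. An algebra of partial functions of this signature is a set of partial functions, with base $X$ the union of all their domains and ranges, closed under: composition $f\circ g=\{(x,z)\mid \exists y\,(x,y)\in f,(y,z)\in g\}$; intersection; antidomain $\mathsf{A}(f)=\{(x,x)\mid x\in X, x\notin\mathrm{dom}(f)\}$. A representation by partial functions is an isomorphism onto such an algebra. The order on $\mathfrak{A}$ is $a\le b\iff a\wedge b=a$; a representable algebra has least element $0=\mathsf{A}(a)\circ a$. An atom is a minimal nonzero element. A representation $\theta$ is atomic if whenever $(x,y)\in\theta(a)$ for some $a\in\mathfrak{A}$, then $(x,y)\in\theta(b)$ for some atom $b$. A representation is complete if it is meet complete (for every nonempty $S$ with $\bigwedge S$ existing, $\theta(\bigwedge S)=\bigcap\theta[S]$), equivalently join complete (for every $S$ with $\bigvee S$ existing, $\theta(\bigvee S)=\bigcup\theta[S]$); these are equivalent for this signature. *)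

theory Defs
  imports Main
begin

definition base :: "('a \<Rightarrow> ('x \<times> 'x) set) \<Rightarrow> 'x set" where
  "base \<theta> = (\<Union>a. Domain (\<theta> a) \<union> Range (\<theta> a))"

text \<open>A representation by partial functions of the algebra (UNIV, compo, mt, ad)
  with composition, intersection (meet) and antidomain.\<close>
definition is_pfun_rep ::
  "('a \<Rightarrow> 'a \<Rightarrow> 'a) \<Rightarrow> ('a \<Rightarrow> 'a \<Rightarrow> 'a) \<Rightarrow> ('a \<Rightarrow> 'a) \<Rightarrow> ('a \<Rightarrow> ('x \<times> 'x) set) \<Rightarrow> bool" where
  "is_pfun_rep compo mt ad \<theta> \<longleftrightarrow>
     inj \<theta> \<and>
     (\<forall>a. single_valued (\<theta> a)) \<and>
     (\<forall>a b. \<theta> (compo a b) = \<theta> a O \<theta> b) \<and>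
     (\<forall>a b. \<theta> (mt a b) = \<theta> a \<inter> \<theta> b) \<and>
     (\<forall>a. \<theta> (ad a) = {(x, x) | x. x \<in> base \<theta> \<and> x \<notin> Domain (\<theta> a)})"

definition leq :: "('a \<Rightarrow> 'a \<Rightarrow> 'a) \<Rightarrow> 'a \<Rightarrow> 'a \<Rightarrow> bool" where
  "leq mt a b \<longleftrightarrow> mt a b = a"

definition is_bot :: "('a \<Rightarrow> 'a \<Rightarrow> 'a) \<Rightarrow> 'a \<Rightarrow> bool" where
  "is_bot mt z \<longleftrightarrow> (\<forall>c. leq mt z c)"

definition is_atom :: "('a \<Rightarrow> 'a \<Rightarrow> 'a) \<Rightarrow> 'a \<Rightarrow> bool" where
  "is_atom mt b \<longleftrightarrow> \<not> is_bot mt b \<and> (\<forall>c. leq mt c b \<longrightarrow> c = b \<or> is_bot mt c)"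

definition atomic_rep :: "('a \<Rightarrow> 'a \<Rightarrow> 'a) \<Rightarrow> ('a \<Rightarrow> ('x \<times> 'x) set) \<Rightarrow> bool" where
  "atomic_rep mt \<theta> \<longleftrightarrow>
     (\<forall>a x y. (x, y) \<in> \<theta> a \<longrightarrow> (\<exists>b. is_atom mt b \<and> (x, y) \<in> \<theta> b))"

definition is_glb :: "('a \<Rightarrow> 'a \<Rightarrow> 'a) \<Rightarrow> 'a set \<Rightarrow> 'a \<Rightarrow> bool" where
  "is_glb mt S m \<longleftrightarrow> (\<forall>s\<in>S. leq mt m s) \<and> (\<forall>c. (\<forall>s\<in>S. leq mt c s) \<longrightarrow> leq mt c m)"

definition complete_rep :: "('a \<Rightarrow> 'a \<Rightarrow> 'a) \<Rightarrow> ('a \<Rightarrow> ('x \<times> 'x) set) \<Rightarrow> bool" where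
  "complete_rep mt \<theta> \<longleftrightarrow>
     (\<forall>S m. S \<noteq> {} \<longrightarrow> is_glb mt S m \<longrightarrow> \<theta> m = \<Inter> (\<theta> ` S))"

end

theory Submission
  imports Defs
begin

(* Injectivity
   and preservation of meets make the algebra order coincide with inclusion of
   the represented relations, so the zero is the element represented by the
   empty relation and atoms are the elements whose representation is a
   minimal nonempty relation.  The antidomain gives restrictions: the element
   compo (ad c) d represents theta d restricted to the points outside the
   domain of theta c.  Since represented relations are single-valued, this
   separates a pair (x, y) of theta a from any element below a missing it.

   atomic ==> complete: a pair in every member of S lies in an atom, which is
   then below every member of S, hence below the meet.
   complete ==> atomic: for (x, y) in theta a let S be the elements below a
   containing (x, y).  Every nonzero lower bound of S is an atom containing
   (x, y); if there were none, the zero would be the meet of S, and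
   completeness would put (x, y) into the empty relation. *)

locale pfun_rep =
  fixes compo mt :: "'a \<Rightarrow> 'a \<Rightarrow> 'a" and ad :: "'a \<Rightarrow> 'a"
    and \<theta> :: "'a \<Rightarrow> ('x \<times> 'x) set"
  assumes rep: "is_pfun_rep compo mt ad \<theta>"
begin

lemma inj_rep: "inj \<theta>"
  and single_valued_rep: "single_valued (\<theta> a)"
  and compo_rep: "\<theta> (compo a b) = \<theta> a O \<theta> b"
  and meet_rep: "\<theta> (mt a b) = \<theta> a \<inter> \<theta> b"
  and ad_rep: "\<theta> (ad a) = {(x, x) | x. x \<in> base \<theta> \<and> x \<notin> Domain (\<theta> a)}"
  using rep unfolding is_pfun_rep_def by auto

lemma leq_iff_subset: "leq mt a b \<longleftrightarrow> \<theta> a \<subseteq> \<theta> b"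
proof -
  have "mt a b = a \<longleftrightarrow> \<theta> (mt a b) = \<theta> a" using inj_rep by (auto dest: injD)
  then show ?thesis unfolding leq_def meet_rep by auto
qed

lemma restrict_rep:
  "\<theta> (compo (ad c) d) = {(u, v). (u, v) \<in> \<theta> d \<and> u \<notin> Domain (\<theta> c)}"
proof -
  have "Domain (\<theta> d) \<subseteq> base \<theta>" unfolding base_def by auto
  then show ?thesis unfolding compo_rep ad_rep by auto
qed

lemma zero_rep: "\<theta> (compo (ad a) a) = {}"
  using restrict_rep[of a a] by auto

lemma bot_iff_empty: "is_bot mt c \<longleftrightarrow> \<theta> c = {}"
proof
  assume "is_bot mt c"
  then have "\<theta> c \<subseteq> \<theta> (compo (ad c) c)"
    unfolding is_bot_def leq_iff_subset by blast
  then show "\<theta> c = {}" using zero_rep by auto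
qed (auto simp: is_bot_def leq_iff_subset)

lemma atom_iff:
  "is_atom mt b \<longleftrightarrow> \<theta> b \<noteq> {} \<and> (\<forall>c. \<theta> c \<subseteq> \<theta> b \<longrightarrow> c = b \<or> \<theta> c = {})"
  unfolding is_atom_def bot_iff_empty leq_iff_subset ..

text \<open>Separation: if (x, y) lies in theta a but not in the smaller theta c,
  then x is outside the domain of theta c (single-valuedness), so restricting
  a away from c keeps (x, y) and is disjoint from theta c.\<close>
lemma separate:
  assumes xy: "(x, y) \<in> \<theta> a" and notin: "(x, y) \<notin> \<theta> c" and sub: "\<theta> c \<subseteq> \<theta> a"
  shows "(x, y) \<in> \<theta> (compo (ad c) a)" and "\<theta> c \<inter> \<theta> (compo (ad c) a) = {}"
proof -
  have "x \<notin> Domain (\<theta> c)"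
  proof
    assume "x \<in> Domain (\<theta> c)"
    then obtain y' where c: "(x, y') \<in> \<theta> c" by auto
    with sub have "y' = y" using xy single_valued_rep[of a] unfolding single_valued_def by auto
    with c notin show False by simp
  qed
  then show "(x, y) \<in> \<theta> (compo (ad c) a)" using xy restrict_rep by auto
  show "\<theta> c \<inter> \<theta> (compo (ad c) a) = {}" using restrict_rep by auto
qed

lemma atom_below:
  assumes "is_atom mt b" and "(x, y) \<in> \<theta> b" and "(x, y) \<in> \<theta> s"
  shows "\<theta> b \<subseteq> \<theta> s"
proof -
  have "\<theta> (mt b s) \<subseteq> \<theta> b" and "\<theta> (mt b s) \<noteq> {}" using assms(2,3) by (auto simp: meet_rep)
  then have "mt b s = b" using assms(1) unfolding atom_iff by blast
  then show ?thesis using meet_rep[of b s] by auto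
qed

lemma atomic_imp_complete:
  assumes "atomic_rep mt \<theta>"
  shows "complete_rep mt \<theta>"
  unfolding complete_rep_def
proof (intro allI impI)
  fix S m assume "S \<noteq> {}" and glb: "is_glb mt S m"
  have "\<Inter> (\<theta> ` S) \<subseteq> \<theta> m"
  proof
    fix p assume p: "p \<in> \<Inter> (\<theta> ` S)"
    obtain x y where p_eq: "p = (x, y)" by fastforce
    from \<open>S \<noteq> {}\<close> p obtain s where "s \<in> S" "p \<in> \<theta> s" by auto
    then obtain b where b: "is_atom mt b" "(x, y) \<in> \<theta> b"
      using assms p_eq unfolding atomic_rep_def by blast
    have "\<forall>s\<in>S. leq mt b s" using atom_below[OF b] p p_eq by (auto simp: leq_iff_subset)
    then have "\<theta> b \<subseteq> \<theta> m" using glb unfolding is_glb_def leq_iff_subset by blast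
    then show "p \<in> \<theta> m" using b p_eq by auto
  qed
  moreover have "\<theta> m \<subseteq> \<Inter> (\<theta> ` S)" using glb unfolding is_glb_def leq_iff_subset by auto
  ultimately show "\<theta> m = \<Inter> (\<theta> ` S)" by blast
qed

definition pair_filter :: "'x \<Rightarrow> 'x \<Rightarrow> 'a \<Rightarrow> 'a set" where
  "pair_filter x y a = {c. \<theta> c \<subseteq> \<theta> a \<and> (x, y) \<in> \<theta> c}"

lemma lower_bound_pair_filter:
  assumes xy: "(x, y) \<in> \<theta> a"
    and lb: "\<forall>s\<in>pair_filter x y a. \<theta> l \<subseteq> \<theta> s" and nonzero: "\<theta> l \<noteq> {}"
  shows "is_atom mt l" and "(x, y) \<in> \<theta> l"
proof -
  have "a \<in> pair_filter x y a" using xy unfolding pair_filter_def by auto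
  with lb have la: "\<theta> l \<subseteq> \<theta> a" by blast
  show l_xy: "(x, y) \<in> \<theta> l"
  proof (rule ccontr)
    assume "(x, y) \<notin> \<theta> l"
    note sep = separate[OF xy this la]
    then have "compo (ad l) a \<in> pair_filter x y a"
      using restrict_rep unfolding pair_filter_def by auto
    with lb have "\<theta> l \<subseteq> \<theta> (compo (ad l) a)" by blast
    with sep(2) nonzero show False by blast
  qed
  have "c = l \<or> \<theta> c = {}" if cl: "\<theta> c \<subseteq> \<theta> l" for c
  proof (cases "(x, y) \<in> \<theta> c")
    case True
    then have "c \<in> pair_filter x y a" using cl la unfolding pair_filter_def by auto
    with lb cl have "\<theta> c = \<theta> l" by blast
    then show ?thesis using inj_rep by (auto dest: injD)
  next
    case False
    note sep = separate[OF l_xy False cl]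
    then have "compo (ad c) l \<in> pair_filter x y a"
      using restrict_rep la unfolding pair_filter_def by auto
    with lb have "\<theta> l \<subseteq> \<theta> (compo (ad c) l)" by blast
    with sep(2) cl show ?thesis by blast
  qed
  then show "is_atom mt l" using nonzero unfolding atom_iff by blast
qed

lemma complete_imp_atomic:
  assumes complete: "complete_rep mt \<theta>"
  shows "atomic_rep mt \<theta>"
  unfolding atomic_rep_def
proof (intro allI impI)
  fix a x y assume xy: "(x, y) \<in> \<theta> a"
  let ?S = "pair_filter x y a" and ?z = "compo (ad a) a"
  show "\<exists>b. is_atom mt b \<and> (x, y) \<in> \<theta> b"
  proof (rule ccontr)
    assume no_atom: "\<not> (\<exists>b. is_atom mt b \<and> (x, y) \<in> \<theta> b)"
    have "is_glb mt ?S ?z"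
      unfolding is_glb_def leq_iff_subset zero_rep
      using lower_bound_pair_filter[OF xy] no_atom by blast
    moreover have "a \<in> ?S" using xy unfolding pair_filter_def by auto
    ultimately have "\<theta> ?z = \<Inter> (\<theta> ` ?S)" using complete unfolding complete_rep_def by blast
    then show False using zero_rep \<open>a \<in> ?S\<close> unfolding pair_filter_def by auto
  qed
qed

end

theorem mainTheorem4:
  fixes compo mt :: "'a \<Rightarrow> 'a \<Rightarrow> 'a" and ad :: "'a \<Rightarrow> 'a"
    and \<theta> :: "'a \<Rightarrow> ('x \<times> 'x) set"
  assumes "is_pfun_rep compo mt ad \<theta>"
  shows "atomic_rep mt \<theta> \<longleftrightarrow> complete_rep mt \<theta>"
proof -
  interpret pfun_rep compo mt ad \<theta> using assms by unfold_locales
  show ?thesis using atomic_imp_complete complete_imp_atomic by blast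
qed

end
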